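(* Let $(S_n)_{n\in\mathbb{N}}$ be a simple random walk on $\mathbb{Z}$ with constant transition probability $p\equiv\overline{p}\in(0,1)$, $\overline{p}\neq\frac12$ (i.e. i.i.d. steps equal to $+1$ with probability $\overline{p}$ and $-1$ with probability $1-\overline{p}$). Then there exists a bounded function $f:\mathbb{Z}\to\mathbb{R}$ such that the sequence $\ell_n(f)=\frac1n\sum_{j=1}^n f(S_j)$, $n\in\mathbb{N}$, does not satisfy a large deviation principle.
   Context: A sequence of real random variables $(X_n)$ satisfies a large deviation principle if there is a lower semicontinuous $J:\mathbb{R}\to[0,\infty]$ with $-\inf_U J\le\liminf_n\frac1n\log\mathbb{P}(X_n\in U)$ for all open $U$ and $\limsup_n\frac1n\log\mathbb{P}(X_n\in F)\le-\inf_F J$ for all closed $F$. The walk starts at $S_1=0$. *)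

theory Defs
  imports "HOL-Probability.Probability"
begin

definition lower_semicont :: "(real \<Rightarrow> ereal) \<Rightarrow> bool" where
  "lower_semicont J \<longleftrightarrow> (\<forall>c::ereal. closed {x. J x \<le> c})"

definition eln :: "real \<Rightarrow> ereal" where
  "eln q = (if q = 0 then -\<infinity> else ereal (ln q))"

definition satisfies_LDP :: "'a measure \<Rightarrow> (nat \<Rightarrow> 'a \<Rightarrow> real) \<Rightarrow> bool" where
  "satisfies_LDP M Y \<longleftrightarrow>
     (\<exists>J :: real \<Rightarrow> ereal. lower_semicont J \<and> (\<forall>x. 0 \<le> J x) \<and>
       (\<forall>U. open U \<longrightarrow>
          - (INF x\<in>U. J x) \<le>
            liminf (\<lambda>n. ereal (1 / real n) * eln (measure M {\<omega> \<in> space M. Y n \<omega> \<in> U}))) \<and>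
       (\<forall>F. closed F \<longrightarrow>
          limsup (\<lambda>n. ereal (1 / real n) * eln (measure M {\<omega> \<in> space M. Y n \<omega> \<in> F}))
            \<le> - (INF x\<in>F. J x)))"

text \<open>Simple random walk started at S_1 = 0 with steps X 1, X 2, ...:
  S_j = X 1 + ... + X (j-1).\<close>
definition walk :: "(nat \<Rightarrow> 'a \<Rightarrow> int) \<Rightarrow> nat \<Rightarrow> 'a \<Rightarrow> int" where
  "walk X j \<omega> = (\<Sum>i\<in>{1..<j}. X i \<omega>)"

definition empirical_avg :: "(int \<Rightarrow> real) \<Rightarrow> (nat \<Rightarrow> 'a \<Rightarrow> int) \<Rightarrow> nat \<Rightarrow> 'a \<Rightarrow> real" where
  "empirical_avg f X n \<omega> = (1 / real n) * (\<Sum>j=1..n. f (walk X j \<omega>))"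

end

theory Submission
  imports Defs "HOL-Real_Asymp.Real_Asymp"
begin

text \<open>The walk has drift \<open>\<mu> = 2p - 1 \<noteq> 0\<close>. By Hoeffding's inequality and a union bound,
  outside an event of exponentially small probability every \<open>S\<^sub>j\<close> with \<open>N/4 < j \<le> N\<close>
  satisfies \<open>|S\<^sub>j - \<mu>(j - 1)| < |\<mu>|(j - 1)/2\<close>. Let \<open>f\<close> be the indicator of the annuli
  \<open>B^(2k) \<le> |x| < B^(2k+1)\<close>, where \<open>B = 2C\<close> and \<open>C|\<mu>| \<ge> 16\<close>. At the times \<open>N = C B^m\<close>
  these \<open>S\<^sub>j\<close> then all lie in the single annulus \<open>B^m \<le> |x| < B^(m+1)\<close>, so \<open>\<ell>\<^sub>N(f)\<close> is
  within \<open>1/4\<close> of \<open>1\<close> for even \<open>m\<close> and of \<open>0\<close> for odd \<open>m\<close>. Along even \<open>m\<close> the probability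
  of \<open>\<ell>\<^sub>N(f) < 1/2\<close> thus decays exponentially, while along odd \<open>m\<close> the probability of
  \<open>\<ell>\<^sub>N(f) \<le> 1/4\<close> tends to \<open>1\<close>. Any LDP forces the \<open>limsup\<close> of the rates
  \<open>(1/n) log P(\<ell>\<^sub>n(f) \<in> A)\<close> for the closed set \<open>A = (-\<infinity>, 1/4]\<close> to be at most their
  \<open>liminf\<close> for the open set \<open>A = (-\<infinity>, 1/2)\<close>, which these two subsequences violate.\<close>

definition ldp_rate :: "'a measure \<Rightarrow> (nat \<Rightarrow> 'a \<Rightarrow> real) \<Rightarrow> real set \<Rightarrow> nat \<Rightarrow> ereal" where
  "ldp_rate M Y A n = ereal (1 / real n) * eln (measure M {\<omega> \<in> space M. Y n \<omega> \<in> A})"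

lemma LDP_limsup_closed_le_liminf_open:
  assumes "satisfies_LDP M Y" "closed F" "open U" "F \<subseteq> U"
  shows "limsup (ldp_rate M Y F) \<le> liminf (ldp_rate M Y U)"
proof -
  obtain J :: "real \<Rightarrow> ereal" where
    lower: "- (INF x\<in>U. J x) \<le> liminf (ldp_rate M Y U)" and
    upper: "limsup (ldp_rate M Y F) \<le> - (INF x\<in>F. J x)"
    using assms(1-3) unfolding satisfies_LDP_def ldp_rate_def by blast
  have "- (INF x\<in>F. J x) \<le> - (INF x\<in>U. J x)"
    using assms(4) by (simp add: INF_superset_mono)
  with lower upper show ?thesis by order
qed

lemma ldp_rate_le_ln:
  assumes "0 < n" "0 < r" "measure M {\<omega> \<in> space M. Y n \<omega> \<in> A} \<le> r"
  shows "ldp_rate M Y A n \<le> ereal (ln r / real n)"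
proof (cases "measure M {\<omega> \<in> space M. Y n \<omega> \<in> A} = 0")
  case False
  then have "ln (measure M {\<omega> \<in> space M. Y n \<omega> \<in> A}) \<le> ln r"
    using assms(2,3) by (simp add: zero_less_measure_iff)
  with False assms(1) show ?thesis
    by (simp add: ldp_rate_def eln_def divide_right_mono)
qed (use assms(1) in \<open>simp add: ldp_rate_def eln_def\<close>)

lemma ln_le_ldp_rate:
  assumes "0 < n" "0 < r" "r \<le> measure M {\<omega> \<in> space M. Y n \<omega> \<in> A}"
  shows "ereal (ln r / real n) \<le> ldp_rate M Y A n"
proof -
  have "ln r \<le> ln (measure M {\<omega> \<in> space M. Y n \<omega> \<in> A})"
    using assms(2,3) by simp
  with assms show ?thesis
    by (simp add: ldp_rate_def eln_def divide_right_mono)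
qed

lemma liminf_le_if_eventually_le_along:
  fixes u :: "nat \<Rightarrow> 'a :: complete_linorder" and r :: "nat \<Rightarrow> nat"
  assumes "strict_mono r" "eventually P sequentially" "\<And>k. P (r k) \<Longrightarrow> u (r k) \<le> c"
  shows "liminf u \<le> c"
proof -
  have "eventually (\<lambda>k. (u \<circ> r) k \<le> c) sequentially"
    using eventually_subseq[OF assms(1,2)] by (auto elim!: eventually_mono intro: assms(3))
  then have "liminf (u \<circ> r) \<le> c"
    by (simp add: Liminf_le)
  with liminf_subseq_mono[OF assms(1), of u] show ?thesis by order
qed

lemma le_limsup_if_eventually_ge_along:
  fixes u :: "nat \<Rightarrow> 'a :: complete_linorder" and r :: "nat \<Rightarrow> nat"
  assumes "strict_mono r" "eventually P sequentially" "\<And>k. P (r k) \<Longrightarrow> c \<le> u (r k)"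
  shows "c \<le> limsup u"
proof -
  have "eventually (\<lambda>k. c \<le> (u \<circ> r) k) sequentially"
    using eventually_subseq[OF assms(1,2)] by (auto elim!: eventually_mono intro: assms(3))
  then have "c \<le> limsup (u \<circ> r)"
    by (simp add: le_Limsup)
  with limsup_subseq_mono[OF assms(1), of u] show ?thesis by order
qed

definition alternating_blocks :: "nat \<Rightarrow> int \<Rightarrow> real" where
  "alternating_blocks B x =
     (if \<exists>k. int B ^ (2 * k) \<le> \<bar>x\<bar> \<and> \<bar>x\<bar> < int B ^ (2 * k + 1) then 1 else 0)"

lemma alternating_blocks_bounded: "bounded (range (alternating_blocks B))"
  unfolding bounded_iff alternating_blocks_def by (intro exI[of _ 1]) auto

lemma power_interval_unique:
  fixes b y :: "'a :: linordered_idom"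
  assumes "1 < b" "b ^ m \<le> y" "y < b ^ (m + 1)" "b ^ n \<le> y" "y < b ^ (n + 1)"
  shows "m = n"
proof -
  have "m < n + 1" "n < m + 1"
    using assms power_strict_increasing_iff[OF assms(1)] by (meson le_less_trans)+
  then show ?thesis by simp
qed

lemma alternating_blocks_eq:
  assumes "2 \<le> B" "int B ^ m \<le> \<bar>x\<bar>" "\<bar>x\<bar> < int B ^ (m + 1)"
  shows "alternating_blocks B x = (if even m then 1 else 0)"
proof -
  have "(\<exists>k. int B ^ (2 * k) \<le> \<bar>x\<bar> \<and> \<bar>x\<bar> < int B ^ (2 * k + 1)) \<longleftrightarrow> even m"
  proof
    assume "\<exists>k. int B ^ (2 * k) \<le> \<bar>x\<bar> \<and> \<bar>x\<bar> < int B ^ (2 * k + 1)"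
    then obtain k where "int B ^ (2 * k) \<le> \<bar>x\<bar>" "\<bar>x\<bar> < int B ^ (2 * k + 1)"
      by blast
    with assms have "2 * k = m"
      by (intro power_interval_unique[of "int B" _ "\<bar>x\<bar>"]) auto
    then show "even m" by auto
  next
    assume "even m"
    with assms show "\<exists>k. int B ^ (2 * k) \<le> \<bar>x\<bar> \<and> \<bar>x\<bar> < int B ^ (2 * k + 1)"
      by (auto elim!: evenE)
  qed
  then show ?thesis by (simp add: alternating_blocks_def)
qed

lemma average_near_tail_value:
  fixes a :: "nat \<Rightarrow> real"
  assumes "0 < N" "\<And>j. 0 \<le> a j \<and> a j \<le> 1" "0 \<le> v" "v \<le> 1"
    and "\<And>j. j \<in> {N div 4<..N} \<Longrightarrow> a j = v"
  shows "\<bar>(1 / real N) * (\<Sum>j=1..N. a j) - v\<bar> \<le> 1 / 4"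
proof -
  have "(\<Sum>j=1..N. a j) - real N * v = (\<Sum>j=1..N. a j - v)"
    by (simp add: sum_subtractf)
  also have "\<dots> = (\<Sum>j=1..N div 4. a j - v)"
    using assms(5) by (intro sum.mono_neutral_right) auto
  finally have "\<bar>(\<Sum>j=1..N. a j) - real N * v\<bar> \<le> (\<Sum>j=1..N div 4. \<bar>a j - v\<bar>)"
    by (simp only: sum_abs)
  also have "\<dots> \<le> (\<Sum>j=1..N div 4. 1)"
  proof (intro sum_mono)
    show "\<bar>a j - v\<bar> \<le> 1" for j
      using assms(2)[of j] assms(3,4) by linarith
  qed
  also have "\<dots> \<le> real N / 4"
    by simp
  finally have "\<bar>(\<Sum>j=1..N. a j) - real N * v\<bar> / real N \<le> 1 / 4"
    using assms(1) by (simp add: divide_le_eq)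
  moreover have "(1 / real N) * (\<Sum>j=1..N. a j) - v = ((\<Sum>j=1..N. a j) - real N * v) / real N"
    using assms(1) by (simp add: field_simps)
  ultimately show ?thesis
    by (simp add: abs_divide)
qed

locale simple_random_walk = prob_space M for M :: "'a measure" +
  fixes X :: "nat \<Rightarrow> 'a \<Rightarrow> int" and p :: real
  assumes step_measurable[measurable]: "\<And>i. X i \<in> measurable M (count_space UNIV)"
    and steps_indep: "indep_vars (\<lambda>_. count_space UNIV) X UNIV"
    and prob_step_up: "\<And>i. prob {\<omega> \<in> space M. X i \<omega> = 1} = p"
    and prob_step_down: "\<And>i. prob {\<omega> \<in> space M. X i \<omega> = -1} = 1 - p"
begin

definition drift :: real where
  "drift = 2 * p - 1"

lemma abs_drift_le_1: "\<bar>drift\<bar> \<le> 1"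
  using measure_nonneg[of M "{\<omega> \<in> space M. X 0 \<omega> = 1}"]
    measure_nonneg[of M "{\<omega> \<in> space M. X 0 \<omega> = -1}"]
  by (simp add: drift_def prob_step_up prob_step_down)

lemma AE_step_pm1: "AE \<omega> in M. X i \<omega> = 1 \<or> X i \<omega> = -1"
proof -
  have "prob ({\<omega> \<in> space M. X i \<omega> = 1} \<union> {\<omega> \<in> space M. X i \<omega> = -1}) = 1"
    by (subst finite_measure_Union) (auto simp: prob_step_up prob_step_down)
  from AE_prob_1[OF this] show ?thesis by auto
qed

lemma expectation_step: "expectation (\<lambda>\<omega>. real_of_int (X i \<omega>)) = drift"
proof -
  have "expectation (\<lambda>\<omega>. real_of_int (X i \<omega>)) =
        expectation (\<lambda>\<omega>. 2 * indicator {\<omega> \<in> space M. X i \<omega> = 1} \<omega> - 1)"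
    by (rule integral_cong_AE) (use AE_step_pm1[of i] in \<open>auto elim!: AE_mp\<close>)
  also have "\<dots> = 2 * p - 1"
    by (subst Bochner_Integration.integral_diff)
       (auto simp: prob_step_up prob_space emeasure_eq_measure intro!: integrable_real_indicator)
  finally show ?thesis by (simp add: drift_def)
qed

lemma walk_real_measurable[measurable]: "(\<lambda>\<omega>. real_of_int (walk X j \<omega>)) \<in> borel_measurable M"
  unfolding walk_def of_int_sum by measurable

lemma walk_measurable[measurable]: "walk X j \<in> measurable M (count_space UNIV)"
proof (subst measurable_count_space_eq2_countable, safe)
  fix a :: int
  have "walk X j -` {a} \<inter> space M = {\<omega> \<in> space M. real_of_int (walk X j \<omega>) = real_of_int a}"
    by auto
  also have "\<dots> \<in> sets M" by measurable
  finally show "walk X j -` {a} \<inter> space M \<in> sets M" .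
qed auto

lemma prob_walk_deviation:
  assumes "0 < e" "2 \<le> j"
  shows "prob {\<omega> \<in> space M. e * (real j - 1) \<le> \<bar>walk X j \<omega> - drift * (real j - 1)\<bar>}
           \<le> 2 * exp (- (e\<^sup>2 * (real j - 1) / 2))"
proof -
  let ?Y = "\<lambda>i \<omega>. real_of_int (X i \<omega>)"
  interpret Hoeffding_ineq M "{1..<j}" ?Y "\<lambda>_. -1" "\<lambda>_. 1" "\<Sum>i\<in>{1..<j}. expectation (?Y i)"
  proof unfold_locales
    show "indep_vars (\<lambda>_. borel) ?Y {1..<j}"
      by (rule indep_vars_compose2[where X=X and M'="\<lambda>_. count_space UNIV"])
         (auto intro: indep_vars_subset[OF steps_indep])
    show "AE x in M. ?Y i x \<in> {-1..1}" for i
      using AE_step_pm1[of i] by (auto elim!: AE_mp)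
  qed auto
  have mean: "(\<Sum>i\<in>{1..<j}. expectation (?Y i)) = drift * (real j - 1)"
    using assms(2) by (simp add: expectation_step of_nat_diff)
  have width: "(\<Sum>i\<in>{1..<j}. (1 - (-1::real))\<^sup>2) = 4 * (real j - 1)"
    using assms(2) by (simp add: of_nat_diff)
  have "prob {\<omega> \<in> space M. e * (real j - 1) \<le> \<bar>(\<Sum>i\<in>{1..<j}. ?Y i \<omega>) - drift * (real j - 1)\<bar>}
     \<le> 2 * exp (-2 * (e * (real j - 1))\<^sup>2 / (4 * (real j - 1)))"
    using Hoeffding_ineq_abs_ge[of "e * (real j - 1)"] assms unfolding mean width by simp
  also have "-2 * (e * (real j - 1))\<^sup>2 / (4 * (real j - 1)) = - (e\<^sup>2 * (real j - 1) / 2)"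
    using assms(2) by (simp add: power2_eq_square field_simps)
  finally show ?thesis
    by (simp add: walk_def)
qed

lemma empirical_avg_measurable[measurable]: "empirical_avg f X N \<in> borel_measurable M"
  unfolding empirical_avg_def by measurable

definition window_deviation :: "real \<Rightarrow> nat \<Rightarrow> 'a set" where
  "window_deviation e N = {\<omega> \<in> space M. \<exists>j \<in> {N div 4<..N}.
     e * (real j - 1) \<le> \<bar>walk X j \<omega> - drift * (real j - 1)\<bar>}"

lemma window_deviation_sets[measurable]: "window_deviation e N \<in> sets M"
  unfolding window_deviation_def by measurable

lemma prob_window_deviation:
  assumes "0 < e" "4 \<le> N"
  shows "prob (window_deviation e N) \<le> 2 * real N * exp (- (e\<^sup>2 * (real N - 4) / 8))"
proof -
  let ?E = "\<lambda>j. {\<omega> \<in> space M. e * (real j - 1) \<le> \<bar>walk X j \<omega> - drift * (real j - 1)\<bar>}"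
  have "window_deviation e N = (\<Union>j\<in>{N div 4<..N}. ?E j)"
    unfolding window_deviation_def by auto
  moreover have "?E j \<in> sets M" for j
    by measurable
  ultimately have "prob (window_deviation e N) \<le> (\<Sum>j\<in>{N div 4<..N}. prob (?E j))"
    by (auto intro: finite_measure_subadditive_finite)
  also have "\<dots> \<le> (\<Sum>j\<in>{N div 4<..N}. 2 * exp (- (e\<^sup>2 * (real N - 4) / 8)))"
  proof (rule sum_mono)
    fix j assume j: "j \<in> {N div 4<..N}"
    then have "2 \<le> j" "real N - 4 \<le> 4 * (real j - 1)"
      using assms(2) by auto
    then have "prob (?E j) \<le> 2 * exp (- (e\<^sup>2 * (real j - 1) / 2))"
      using prob_walk_deviation assms(1) by blast
    moreover have "e\<^sup>2 * ((real N - 4) / 8) \<le> e\<^sup>2 * ((real j - 1) / 2)"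
      using \<open>real N - 4 \<le> 4 * (real j - 1)\<close> by (intro mult_left_mono) auto
    then have "exp (- (e\<^sup>2 * (real j - 1) / 2)) \<le> exp (- (e\<^sup>2 * (real N - 4) / 8))"
      by simp
    ultimately show "prob (?E j) \<le> 2 * exp (- (e\<^sup>2 * (real N - 4) / 8))"
      by linarith
  qed
  also have "\<dots> \<le> real N * (2 * exp (- (e\<^sup>2 * (real N - 4) / 8)))"
    by simp
  finally show ?thesis by simp
qed

end

locale biased_random_walk = simple_random_walk +
  assumes biased: "p \<noteq> 1 / 2"
begin

definition margin :: real where
  "margin = \<bar>drift\<bar> / 2"

lemma margin_pos: "0 < margin"
  using biased by (simp add: margin_def drift_def)

definition scale :: nat where
  "scale = nat \<lceil>16 / \<bar>drift\<bar>\<rceil>"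

definition base :: nat where
  "base = 2 * scale"

lemma scale_large: "16 \<le> \<bar>drift\<bar> * real scale"
proof -
  have "16 / \<bar>drift\<bar> \<le> real scale"
    unfolding scale_def by linarith
  with margin_pos show ?thesis
    by (simp add: margin_def field_simps)
qed

lemma scale_pos: "0 < scale"
  using scale_large by (auto intro: Nat.gr0I)

lemma base_ge_2: "2 \<le> base"
  using scale_pos by (simp add: base_def)

lemma strict_mono_scale_base_power: "strict_mono (\<lambda>k. scale * base ^ (2 * k + i))"
proof (rule strict_monoI_Suc)
  fix k
  have "base ^ (2 * k + i) < base ^ (2 * Suc k + i)"
    using base_ge_2 by (intro power_strict_increasing) auto
  then show "scale * base ^ (2 * k + i) < scale * base ^ (2 * Suc k + i)"
    using scale_pos by simp
qed

lemma walk_in_annulus: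
  assumes "\<omega> \<in> space M - window_deviation margin N" "N = scale * base ^ m" "j \<in> {N div 4<..N}"
  shows "int base ^ m \<le> \<bar>walk X j \<omega>\<bar> \<and> \<bar>walk X j \<omega>\<bar> < int base ^ (m + 1)"
proof -
  define s t where "s = real_of_int (walk X j \<omega>)" and "t = real j - 1"
  have close: "\<bar>s - drift * t\<bar> < margin * t"
    using assms(1,3) by (auto simp: window_deviation_def s_def t_def not_le)
  have t: "0 \<le> t" "real N - 4 \<le> 4 * t" "t < real N"
    using assms(3) by (auto simp: t_def)
  have "\<bar>drift * t\<bar> = 2 * margin * t"
    using t by (simp add: margin_def abs_mult)
  with close have lower: "margin * t < \<bar>s\<bar>" and upper: "\<bar>s\<bar> < 3 * margin * t"
    by linarith+
  have "16 * real base ^ m \<le> \<bar>drift\<bar> * real N"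
    using scale_large by (simp add: assms(2) mult.assoc[symmetric] mult_right_mono)
  moreover have "1 \<le> real base ^ m" "\<bar>drift\<bar> \<le> 1"
    using base_ge_2 abs_drift_le_1 by auto
  moreover have "margin * (real N - 4) / 4 = \<bar>drift\<bar> * real N / 8 - \<bar>drift\<bar> / 2"
    by (simp add: margin_def field_simps)
  ultimately have "real base ^ m \<le> margin * (real N - 4) / 4"
    by linarith
  also have "\<dots> \<le> margin * t"
    using t margin_pos by (simp add: mult_left_mono)
  finally have "real base ^ m < \<bar>s\<bar>"
    using lower by linarith
  have "3 * margin * t \<le> 3 / 2 * t"
    using t abs_drift_le_1 by (intro mult_right_mono) (auto simp: margin_def)
  moreover have "real base ^ (m + 1) = 2 * real N"
    by (simp add: assms(2) base_def)
  ultimately have "\<bar>s\<bar> < real base ^ (m + 1)"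
    using upper t by linarith
  with \<open>real base ^ m < \<bar>s\<bar>\<close>
  have "real_of_int (int base ^ m) < real_of_int \<bar>walk X j \<omega>\<bar>"
    and "real_of_int \<bar>walk X j \<omega>\<bar> < real_of_int (int base ^ (m + 1))"
    by (simp_all add: s_def)
  then show ?thesis
    unfolding of_int_less_iff by simp
qed

abbreviation block_avg :: "nat \<Rightarrow> 'a \<Rightarrow> real" where
  "block_avg \<equiv> empirical_avg (alternating_blocks base) X"

lemma block_avg_near_parity:
  assumes "\<omega> \<in> space M - window_deviation margin N" "N = scale * base ^ m"
  shows "\<bar>block_avg N \<omega> - (if even m then 1 else 0)\<bar> \<le> 1 / 4"
  unfolding empirical_avg_def
proof (rule average_near_tail_value)
  show "0 < N"
    using assms(2) scale_pos base_ge_2 by simp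
  show "0 \<le> alternating_blocks base x \<and> alternating_blocks base x \<le> 1" for x
    by (simp add: alternating_blocks_def)
  show "alternating_blocks base (walk X j \<omega>) = (if even m then 1 else 0)" if "j \<in> {N div 4<..N}" for j
    using walk_in_annulus[OF assms that] base_ge_2 by (intro alternating_blocks_eq) auto
qed auto

definition deviation_bound :: "nat \<Rightarrow> real" where
  "deviation_bound N = 2 * real N * exp (- (margin\<^sup>2 * (real N - 4) / 8))"

lemma deviation_bound_pos: "0 < N \<Longrightarrow> 0 < deviation_bound N"
  by (simp add: deviation_bound_def)

lemma prob_block_avg_lt_half:
  assumes "N = scale * base ^ m" "even m" "4 \<le> N"
  shows "prob {\<omega> \<in> space M. block_avg N \<omega> \<in> {..<1/2}} \<le> deviation_bound N"
proof -
  have "{\<omega> \<in> space M. block_avg N \<omega> \<in> {..<1/2}} \<subseteq> window_deviation margin N"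
    using block_avg_near_parity[OF _ assms(1)] assms(2) by fastforce
  then have "prob {\<omega> \<in> space M. block_avg N \<omega> \<in> {..<1/2}} \<le> prob (window_deviation margin N)"
    by (intro finite_measure_mono) auto
  also have "\<dots> \<le> deviation_bound N"
    unfolding deviation_bound_def using prob_window_deviation margin_pos assms(3) by blast
  finally show ?thesis .
qed

lemma prob_block_avg_le_quarter:
  assumes "N = scale * base ^ m" "odd m" "4 \<le> N"
  shows "1 - deviation_bound N \<le> prob {\<omega> \<in> space M. block_avg N \<omega> \<in> {..1/4}}"
proof -
  have "space M - window_deviation margin N \<subseteq> {\<omega> \<in> space M. block_avg N \<omega> \<in> {..1/4}}"
    using block_avg_near_parity[OF _ assms(1)] assms(2) by fastforce
  then have "prob (space M - window_deviation margin N) \<le> prob {\<omega> \<in> space M. block_avg N \<omega> \<in> {..1/4}}"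
    by (intro finite_measure_mono) auto
  moreover have "prob (window_deviation margin N) \<le> deviation_bound N"
    unfolding deviation_bound_def using prob_window_deviation margin_pos assms(3) by blast
  ultimately show ?thesis
    by (simp add: prob_compl)
qed

lemma eventually_deviation_bound_rate:
  "eventually (\<lambda>N. 4 \<le> N \<and> ln (deviation_bound N) / real N \<le> - (margin\<^sup>2 / 16)) sequentially"
proof -
  have "0 < margin\<^sup>2"
    using margin_pos by simp
  then have "eventually (\<lambda>N::nat. ln (2 * real N * exp (- (margin\<^sup>2 * (real N - 4) / 8))) / real N
               \<le> - (margin\<^sup>2 / 16)) sequentially"
    by real_asymp
  then show ?thesis
    unfolding deviation_bound_def by (auto intro: eventually_conj eventually_ge_at_top)
qed

lemma eventually_deviation_bound_small:
  "eventually (\<lambda>N. 4 \<le> N \<and> deviation_bound N \<le> 1 / 2 \<and> - (margin\<^sup>2 / 32) \<le> ln (1 / 2) / real N)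
     sequentially"
proof -
  have "0 < margin\<^sup>2"
    using margin_pos by simp
  then have "eventually (\<lambda>N::nat. 2 * real N * exp (- (margin\<^sup>2 * (real N - 4) / 8)) \<le> 1 / 2) sequentially"
    and "eventually (\<lambda>N::nat. - (margin\<^sup>2 / 32) \<le> ln (1 / 2) / real N) sequentially"
    by real_asymp+
  then show ?thesis
    unfolding deviation_bound_def by (auto intro: eventually_conj eventually_ge_at_top)
qed

lemma liminf_rate_block_avg_lt_half:
  "liminf (ldp_rate M block_avg {..<1/2}) \<le> ereal (- (margin\<^sup>2 / 16))"
proof (rule liminf_le_if_eventually_le_along[OF strict_mono_scale_base_power[of 0]
             eventually_deviation_bound_rate])
  fix k
  let ?N = "scale * base ^ (2 * k + 0)"
  assume N: "4 \<le> ?N \<and> ln (deviation_bound ?N) / real ?N \<le> - (margin\<^sup>2 / 16)"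
  then have "prob {\<omega> \<in> space M. block_avg ?N \<omega> \<in> {..<1/2}} \<le> deviation_bound ?N"
    by (intro prob_block_avg_lt_half[of _ "2 * k + 0"]) auto
  moreover have "0 < ?N"
    using N by linarith
  ultimately have "ldp_rate M block_avg {..<1/2} ?N \<le> ereal (ln (deviation_bound ?N) / real ?N)"
    using deviation_bound_pos ldp_rate_le_ln by blast
  also have "\<dots> \<le> ereal (- (margin\<^sup>2 / 16))"
    using N by simp
  finally show "ldp_rate M block_avg {..<1/2} ?N \<le> ereal (- (margin\<^sup>2 / 16))" .
qed

lemma limsup_rate_block_avg_le_quarter:
  "ereal (- (margin\<^sup>2 / 32)) \<le> limsup (ldp_rate M block_avg {..1/4})"
proof (rule le_limsup_if_eventually_ge_along[OF strict_mono_scale_base_power[of 1]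
             eventually_deviation_bound_small])
  fix k
  let ?N = "scale * base ^ (2 * k + 1)"
  assume N: "4 \<le> ?N \<and> deviation_bound ?N \<le> 1 / 2 \<and> - (margin\<^sup>2 / 32) \<le> ln (1 / 2) / real ?N"
  then have "1 - deviation_bound ?N \<le> prob {\<omega> \<in> space M. block_avg ?N \<omega> \<in> {..1/4}}"
    by (intro prob_block_avg_le_quarter[of _ "2 * k + 1"]) auto
  moreover have "0 < ?N" "1 / 2 \<le> 1 - deviation_bound ?N"
    using N by linarith+
  ultimately have "ereal (ln (1 / 2) / real ?N) \<le> ldp_rate M block_avg {..1/4} ?N"
    by (intro ln_le_ldp_rate) auto
  with N show "ereal (- (margin\<^sup>2 / 32)) \<le> ldp_rate M block_avg {..1/4} ?N"
    by (meson ereal_less_eq(3) order_trans)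
qed

lemma not_LDP_block_avg: "\<not> satisfies_LDP M block_avg"
proof
  assume "satisfies_LDP M block_avg"
  then have "limsup (ldp_rate M block_avg {..1/4}) \<le> liminf (ldp_rate M block_avg {..<1/2})"
    by (rule LDP_limsup_closed_le_liminf_open) auto
  with liminf_rate_block_avg_lt_half limsup_rate_block_avg_le_quarter
  have "ereal (- (margin\<^sup>2 / 32)) \<le> ereal (- (margin\<^sup>2 / 16))"
    by order
  then show False
    using margin_pos by (simp add: power2_eq_square)
qed

end

theorem proposition1p3:
  fixes M :: "'a measure" and X :: "nat \<Rightarrow> 'a \<Rightarrow> int" and p :: real
  assumes "prob_space M"
    and "0 < p" and "p < 1" and "p \<noteq> 1 / 2"
    and "\<And>i. X i \<in> measurable M (count_space UNIV)"
    and "prob_space.indep_vars M (\<lambda>_. count_space UNIV) X UNIV"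
    and "\<And>i. measure M {\<omega> \<in> space M. X i \<omega> = 1} = p"
    and "\<And>i. measure M {\<omega> \<in> space M. X i \<omega> = -1} = 1 - p"
  shows "\<exists>f :: int \<Rightarrow> real. bounded (range f) \<and>
           \<not> satisfies_LDP M (empirical_avg f X)"
proof -
  interpret prob_space M
    by (rule assms(1))
  interpret biased_random_walk M X p
    by unfold_locales (use assms(4-8) in auto)
  show ?thesis
    using alternating_blocks_bounded not_LDP_block_avg by blast
qed

end
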